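(* Let $$A=\begin{pmatrix} 0 & z & -y\\ -z & 0 & x\\ y & -x & 0\end{pmatrix}$$ be a matrix over the polynomial ring $\mathbb{R}[x,y,z]$. Then $A$ is not algebraically shift equivalent over $\mathbb{R}[x,y,z]$ to any nonsingular square matrix over $\mathbb{R}[x,y,z]$. In particular, $A$ is a non-nilpotent matrix over $\mathbb{R}[x,y,z]=\mathbb{R}[x][y,z]$ that is not algebraically shift equivalent to a nonsingular matrix.
   Context: A square matrix over the domain $\mathbb{R}[x,y,z]$ is nonsingular if its determinant is nonzero. Two square matrices $A$ (of order $p$) and $B$ (of order $q$) over a commutative ring $R$ are algebraically shift equivalent of lag $l\in\mathbb{N}$ over $R$ if there exist a $p\times q$ matrix $U$ and a $q\times p$ matrix $V$ over $R$ with $AU=UB$, $VA=BV$, $A^l=UV$ and $B^l=VU$; they are algebraically shift equivalent if this holds for some $l\in\mathbb{N}$. *)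

theory Defs
  imports "HOL-Computational_Algebra.Polynomial" "Jordan_Normal_Form.Determinant"
begin

text \<open>The polynomial ring R[x,y,z] is rendered as the iterated polynomial ring
  ((R[x])[y])[z], i.e. the type real poly poly poly.\<close>

type_synonym rpoly3 = "real poly poly poly"

definition varX :: rpoly3 where "varX = [:[:[:0, 1:]:]:]"
definition varY :: rpoly3 where "varY = [:[:0, 1:]:]"
definition varZ :: rpoly3 where "varZ = [:0, 1:]"

definition matA :: "rpoly3 mat" where
  "matA = mat_of_rows_list 3
     [[0, varZ, - varY],
      [- varZ, 0, varX],
      [varY, - varX, 0]]"

definition alg_shift_equiv_lag :: "nat \<Rightarrow> 'a :: comm_ring_1 mat \<Rightarrow> 'a mat \<Rightarrow> bool" where
  "alg_shift_equiv_lag l A B \<longleftrightarrow>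
     square_mat A \<and> square_mat B \<and>
     (\<exists>U V. U \<in> carrier_mat (dim_row A) (dim_row B) \<and>
            V \<in> carrier_mat (dim_row B) (dim_row A) \<and>
            A * U = U * B \<and> V * A = B * V \<and>
            A ^\<^sub>m l = U * V \<and> B ^\<^sub>m l = V * U)"

definition alg_shift_equiv :: "'a :: comm_ring_1 mat \<Rightarrow> 'a mat \<Rightarrow> bool" where
  "alg_shift_equiv A B \<longleftrightarrow> (\<exists>l. alg_shift_equiv_lag l A B)"

definition nonsingular_mat :: "'a :: comm_ring_1 mat \<Rightarrow> bool" where
  "nonsingular_mat B \<longleftrightarrow> square_mat B \<and> det B \<noteq> 0"

definition nilpotent_mat :: "'a :: comm_ring_1 mat \<Rightarrow> bool" where
  "nilpotent_mat A \<longleftrightarrow> (\<exists>k. A ^\<^sub>m k = 0\<^sub>m (dim_row A) (dim_col A))"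

end

theory Submission
  imports Defs "HOL-Homology.Brouwer_Degree"
begin

text \<open>At a point x of the unit sphere S^2, A specialises to the matrix M_x of v \<mapsto> v \<times> x,
  whose fourth power is the orthogonal projection P_x onto the tangent plane of S^2 at x.
  Raising the lag by one, a shift equivalence with a nonsingular B of order n gives A^L = U V and
  B^L = V U with L \<ge> 1. If n \<ge> 3, then det (V U) = 0, because either n = 3 and
  det (V U) = det (U V) = (det A)^L, where det A = 0 as A is skew-symmetric of odd order, or V U
  factors through a free module of smaller rank; this contradicts det B \<noteq> 0. If n \<le> 2, then
  P_x = M_x^(4L) factors through \<real>^n, and as P_x has rank 2, applying P_x to the first column of
  U evaluated at x gives a nowhere vanishing continuous tangent vector field on S^2. Such a field
  rotates the identity into the antipodal map, which has Brouwer degree -1: the hairy ball theorem.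
  Finally A is not nilpotent, since at a point of the sphere its fourth power specialises to
  P_x \<noteq> 0.\<close>

lemma continuous_map_nsphere_permute:
  assumes "\<sigma> permutes {..p}"
  shows "continuous_map (nsphere p) (nsphere p) (\<lambda>x. x \<circ> \<sigma>)"
proof -
  have outside: "\<sigma> i = i" if "i > p" for i
    using assms that by (meson atMost_iff not_le permutes_not_in)
  have "(\<Sum>i\<le>p. (x (\<sigma> i))\<^sup>2) = (\<Sum>i\<le>p. (x i)\<^sup>2)" for x :: "nat \<Rightarrow> real"
    using sum.permute[OF assms, of "\<lambda>i. (x i)\<^sup>2"] by (simp add: comp_def)
  then show ?thesis
    unfolding nsphere continuous_map_in_subtopology
    by (auto simp: continuous_map_componentwise_UNIV outside
             intro!: continuous_map_from_subtopology continuous_map_product_projection)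
qed

lemma Brouwer_degree2_reflection_coordinate:
  assumes "k \<le> p"
  shows "Brouwer_degree2 p (\<lambda>x i. if i = k then - x i else x i) = -1"
proof -
  define \<tau> where "\<tau> = Transposition.transpose 0 k"
  define s where "s = (\<lambda>x::nat \<Rightarrow> real. x \<circ> \<tau>)"
  define r where "r = (\<lambda>(x::nat \<Rightarrow> real) i. if i = 0 then - x i else x i)"
  have cs: "continuous_map (nsphere p) (nsphere p) s"
    unfolding s_def \<tau>_def using assms by (intro continuous_map_nsphere_permute permutes_swap_id) auto
  have cr: "continuous_map (nsphere p) (nsphere p) r"
    unfolding r_def by (rule continuous_map_nsphere_reflection)
  have "s \<circ> s = id"
    by (auto simp: s_def \<tau>_def fun_eq_iff)
  then have "Brouwer_degree2 p s * Brouwer_degree2 p s = 1"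
    using Brouwer_degree2_compose[OF cs cs] by simp
  moreover have "(\<lambda>x i. if i = k then - x i else x i) = s \<circ> r \<circ> s"
    by (auto simp: s_def r_def \<tau>_def fun_eq_iff Transposition.transpose_def)
  moreover have "Brouwer_degree2 p (s \<circ> r \<circ> s) = Brouwer_degree2 p s * Brouwer_degree2 p r * Brouwer_degree2 p s"
    using Brouwer_degree2_compose[OF cs continuous_map_compose[OF cr cs]]
          Brouwer_degree2_compose[OF cr cs] by (simp add: o_assoc)
  ultimately show ?thesis
    using Brouwer_degree2_reflection[of p] by (simp add: r_def algebra_simps)
qed

lemma Brouwer_degree2_negate_initial_coordinates:
  assumes "k \<le> p"
  shows "continuous_map (nsphere p) (nsphere p) (\<lambda>x i. if i \<le> k then - x i else x i)
       \<and> Brouwer_degree2 p (\<lambda>x i. if i \<le> k then - x i else x i) = (-1) ^ Suc k"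
  using assms
proof (induction k)
  case 0
  then show ?case
    using Brouwer_degree2_reflection_coordinate[of 0 p] continuous_map_nsphere_reflection[of p 0]
    by simp
next
  case (Suc k)
  let ?r = "\<lambda>x i. if i = Suc k then - x i else x i"
  let ?n = "\<lambda>x i. if i \<le> k then - x i else x i"
  have n: "continuous_map (nsphere p) (nsphere p) ?n" "Brouwer_degree2 p ?n = (-1) ^ Suc k"
    using Suc by simp_all
  have r: "continuous_map (nsphere p) (nsphere p) ?r"
    by (rule continuous_map_nsphere_reflection)
  have decompose: "(\<lambda>x i. if i \<le> Suc k then - x i else x i) = ?r \<circ> ?n"
    by (auto simp: fun_eq_iff)
  show ?case
    unfolding decompose
    using Brouwer_degree2_compose[OF n(1) r] continuous_map_compose[OF n(1) r] n(2)
      Brouwer_degree2_reflection_coordinate[OF Suc.prems]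
    by simp
qed

lemma Brouwer_degree2_antipodal: "Brouwer_degree2 p (\<lambda>x i. - x i) = (-1) ^ Suc p"
proof -
  have "Brouwer_degree2 p (\<lambda>x i. - x i) = Brouwer_degree2 p (\<lambda>x i. if i \<le> p then - x i else x i)"
    by (rule Brouwer_degree2_eq) (auto simp: nsphere fun_eq_iff)
  then show ?thesis
    using Brouwer_degree2_negate_initial_coordinates[of p p] by simp
qed

lemma continuous_map_into_nsphere:
  assumes "\<And>i. continuous_map X euclideanreal (\<lambda>z. g z i)"
    and "\<And>z. z \<in> topspace X \<Longrightarrow> g z \<in> topspace (nsphere p)"
  shows "continuous_map X (nsphere p) g"
  using assms unfolding nsphere continuous_map_in_subtopology
  by (auto simp: continuous_map_componentwise_UNIV)

lemma homotopic_id_antipodal_of_tangent_field: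
  assumes w: "continuous_map (nsphere p) (nsphere p) w"
    and tangent: "\<And>x. x \<in> topspace (nsphere p) \<Longrightarrow> (\<Sum>i\<le>p. x i * w x i) = 0"
  shows "homotopic_with (\<lambda>_. True) (nsphere p) (nsphere p) id (\<lambda>x i. - x i)"
proof -
  define h where "h z = (\<lambda>i. cos (pi * fst z) * snd z i + sin (pi * fst z) * w (snd z) i)"
    for z :: "real \<times> (nat \<Rightarrow> real)"
  let ?T = "prod_topology (top_of_set {0..1::real}) (nsphere p)"
  have h_in_sphere: "h (t, x) \<in> topspace (nsphere p)" if x: "x \<in> topspace (nsphere p)" for t x
  proof -
    define c s where "c = cos (pi * t)" and "s = sin (pi * t)"
    have wx: "w x \<in> topspace (nsphere p)"
      using continuous_map_image_subset_topspace[OF w] x by blast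
    have "(c * a + s * b)\<^sup>2 = c\<^sup>2 * a\<^sup>2 + 2 * c * s * (a * b) + s\<^sup>2 * b\<^sup>2" for a b :: real
      by (simp add: power2_eq_square algebra_simps)
    then have "(\<Sum>i\<le>p. (c * x i + s * w x i)\<^sup>2)
        = c\<^sup>2 * (\<Sum>i\<le>p. (x i)\<^sup>2) + 2 * c * s * (\<Sum>i\<le>p. x i * w x i) + s\<^sup>2 * (\<Sum>i\<le>p. (w x i)\<^sup>2)"
      by (simp add: sum.distrib sum_distrib_left)
    also have "\<dots> = 1"
      using x wx tangent[OF x] by (simp add: nsphere c_def s_def)
    finally show ?thesis
      using x wx by (simp add: nsphere h_def c_def s_def)
  qed
  have "continuous_map ?T (nsphere p) h"
  proof (rule continuous_map_into_nsphere)
    have fst: "continuous_map ?T euclideanreal fst"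
      using continuous_map_fst continuous_map_into_fulltopology by blast
    have snd: "continuous_map ?T euclideanreal (\<lambda>z. snd z i)" for i
      using continuous_map_compose[OF continuous_map_snd continuous_map_nsphere_projection]
      by (simp add: o_def)
    have wsnd: "continuous_map ?T euclideanreal (\<lambda>z. w (snd z) i)" for i
      using continuous_map_compose[OF continuous_map_snd
          continuous_map_compose[OF w continuous_map_nsphere_projection]]
      by (simp add: o_def)
    have cos: "continuous_map ?T euclideanreal (\<lambda>z. cos (pi * fst z))"
      and sin: "continuous_map ?T euclideanreal (\<lambda>z. sin (pi * fst z))"
      using continuous_map_compose[OF fst, where g = "\<lambda>t. cos (pi * t)"]
        continuous_map_compose[OF fst, where g = "\<lambda>t. sin (pi * t)"]
      by (simp_all add: o_def continuous_intros)
    show "continuous_map ?T euclideanreal (\<lambda>z. h z i)" for i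
      unfolding h_def by (intro continuous_map_add continuous_map_real_mult cos sin snd wsnd)
  qed (auto intro: h_in_sphere)
  moreover have "h (0, x) = id x" "h (1, x) = (\<lambda>i. - x i)" for x
    by (simp_all add: h_def fun_eq_iff)
  ultimately show ?thesis
    unfolding homotopic_with_def by (intro exI[of _ h]) auto
qed

theorem hairy_ball:
  fixes f :: "(nat \<Rightarrow> real) \<Rightarrow> nat \<Rightarrow> real"
  assumes "even p"
    and cont: "\<And>i. i \<le> p \<Longrightarrow> continuous_map (nsphere p) euclideanreal (\<lambda>x. f x i)"
    and tangent: "\<And>x. x \<in> topspace (nsphere p) \<Longrightarrow> (\<Sum>i\<le>p. x i * f x i) = 0"
  shows "\<exists>x \<in> topspace (nsphere p). \<forall>i\<le>p. f x i = 0"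
proof (rule ccontr)
  assume no_zero: "\<not> ?thesis"
  have nonzero: "(\<Sum>i\<le>p. (f x i)\<^sup>2) > 0" if "x \<in> topspace (nsphere p)" for x
  proof -
    have "\<exists>i\<le>p. f x i \<noteq> 0"
      using no_zero that by blast
    then obtain i where "i \<le> p" "f x i \<noteq> 0"
      by blast
    then show ?thesis
      by (intro sum_pos2[of _ i]) auto
  qed
  define N where "N x = sqrt (\<Sum>i\<le>p. (f x i)\<^sup>2)" for x
  define w where "w x i = (if i \<le> p then f x i / N x else 0)" for x i
  have N_pos: "N x > 0" if "x \<in> topspace (nsphere p)" for x
    using nonzero[OF that] by (simp add: N_def)
  have "continuous_map (nsphere p) (nsphere p) w"
  proof (rule continuous_map_into_nsphere)
    have N: "continuous_map (nsphere p) euclideanreal N"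
      unfolding N_def by (intro continuous_map_sqrt continuous_map_sum continuous_map_real_pow cont) auto
    show "continuous_map (nsphere p) euclideanreal (\<lambda>x. w x i)" for i
    proof (cases "i \<le> p")
      case True
      then have "(\<lambda>x. w x i) = (\<lambda>x. f x i / N x)"
        by (simp add: w_def)
      then show ?thesis
        using continuous_map_real_divide[OF cont[OF True] N] N_pos by fastforce
    qed (simp add: w_def)
  next
    fix x assume x: "x \<in> topspace (nsphere p)"
    have "(N x)\<^sup>2 = (\<Sum>i\<le>p. (f x i)\<^sup>2)"
      unfolding N_def by (simp add: sum_nonneg)
    then have "(\<Sum>i\<le>p. (w x i)\<^sup>2) = 1"
      using nonzero[OF x] by (simp add: w_def power_divide flip: sum_divide_distrib)
    then show "w x \<in> topspace (nsphere p)"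
      by (simp add: nsphere w_def)
  qed
  moreover have "(\<Sum>i\<le>p. x i * w x i) = 0" if "x \<in> topspace (nsphere p)" for x
    using tangent[OF that] by (simp add: w_def times_divide_eq_right flip: sum_divide_distrib)
  ultimately have "Brouwer_degree2 p id = Brouwer_degree2 p (\<lambda>x i. - x i)"
    by (intro Brouwer_degree2_homotopic homotopic_id_antipodal_of_tangent_field)
  then show False
    using \<open>even p\<close> by (simp add: Brouwer_degree2_antipodal)
qed

lemma pow_mat_add:
  assumes "A \<in> carrier_mat n n"
  shows "A ^\<^sub>m (m + k) = A ^\<^sub>m m * A ^\<^sub>m k"
proof (induction k)
  case (Suc k)
  have "A ^\<^sub>m (m + Suc k) = (A ^\<^sub>m m * A ^\<^sub>m k) * A"
    using Suc by simp
  also have "\<dots> = A ^\<^sub>m m * (A ^\<^sub>m k * A)"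
    using assms by (simp add: assoc_mult_mat[of _ n n _ n _ n])
  finally show ?case
    by simp
qed (use assms in simp)

lemma det_pow_mat:
  assumes "A \<in> carrier_mat n n"
  shows "det (A ^\<^sub>m k) = det A ^ k"
  by (induction k) (use assms in \<open>simp_all add: det_mult[of _ n]\<close>)

lemma alg_shift_equiv_lag_Suc:
  assumes "alg_shift_equiv_lag l A B"
  shows "alg_shift_equiv_lag (Suc l) A B"
proof -
  define m n where "m = dim_row A" and "n = dim_row B"
  obtain U V where sq: "square_mat A" "square_mat B"
    and U: "U \<in> carrier_mat m n" and V: "V \<in> carrier_mat n m"
    and AU: "A * U = U * B" and VA: "V * A = B * V"
    and Al: "A ^\<^sub>m l = U * V" and Bl: "B ^\<^sub>m l = V * U"
    using assms unfolding alg_shift_equiv_lag_def m_def n_def by blast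
  have A: "A \<in> carrier_mat m m" and B: "B \<in> carrier_mat n n"
    using sq unfolding m_def n_def by (auto intro: carrier_matI)
  have VA_carrier: "V * A \<in> carrier_mat n m"
    using V A by simp
  have "A ^\<^sub>m Suc l = U * (V * A)"
    using Al U V A by (simp add: assoc_mult_mat[of _ m n _ m _ m])
  moreover have "B ^\<^sub>m Suc l = (V * A) * U"
  proof -
    have "B ^\<^sub>m Suc l = V * (U * B)"
      using Bl U V B by (simp add: assoc_mult_mat[of _ n m _ n _ n])
    also have "\<dots> = (V * A) * U"
      using AU U V A by (simp add: assoc_mult_mat[of _ n m _ m _ n])
    finally show ?thesis .
  qed
  moreover have "(V * A) * A = B * (V * A)"
  proof -
    have "(V * A) * A = (B * V) * A"
      using VA by simp
    also have "\<dots> = B * (V * A)"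
      using V A B by (simp add: assoc_mult_mat[of _ n n _ m _ m])
    finally show ?thesis .
  qed
  ultimately show ?thesis
    unfolding alg_shift_equiv_lag_def m_def[symmetric] n_def[symmetric]
    using sq U VA_carrier AU by blast
qed

lemma det_zero_row:
  assumes "A \<in> carrier_mat n n" and "k < n" and "\<And>j. j < n \<Longrightarrow> A $$ (k, j) = 0"
  shows "det A = 0"
proof -
  have "(\<Prod>i = 0..<n. A $$ (i, p i)) = 0" if "p permutes {0..<n}" for p
    using assms that by (intro prod_zero bexI[of _ k]) (auto simp: permutes_in_image)
  then show ?thesis
    unfolding det_def' [OF assms(1)] by simp
qed

lemma det_mult_through_smaller_dim:
  fixes U V :: "'a :: comm_ring_1 mat"
  assumes U: "U \<in> carrier_mat m n" and V: "V \<in> carrier_mat n m" and "m < n"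
  shows "det (V * U) = 0"
proof -
  define U' where "U' = Matrix.mat n n (\<lambda>(i, j). if i < m then U $$ (i, j) else 0)"
  define V' where "V' = Matrix.mat n n (\<lambda>(i, j). if j < m then V $$ (i, j) else 0)"
  have U': "U' \<in> carrier_mat n n" and V': "V' \<in> carrier_mat n n"
    unfolding U'_def V'_def by auto
  have "V * U = V' * U'"
  proof (rule eq_matI)
    fix i j assume "i < dim_row (V' * U')" "j < dim_col (V' * U')"
    then have ij: "i < n" "j < n" using U' V' by auto
    have "(V' * U') $$ (i, j) = (\<Sum>k = 0..<n. V' $$ (i, k) * U' $$ (k, j))"
      using ij U' V' by (simp add: scalar_prod_def)
    also have "\<dots> = (\<Sum>k = 0..<m. V $$ (i, k) * U $$ (k, j))"
      using ij \<open>m < n\<close> by (intro sum.mono_neutral_cong_right) (auto simp: U'_def V'_def)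
    also have "\<dots> = (V * U) $$ (i, j)"
      using ij U V by (simp add: scalar_prod_def)
    finally show "(V * U) $$ (i, j) = (V' * U') $$ (i, j)" ..
  qed (use U V U' V' in auto)
  moreover have "det U' = 0"
    using \<open>m < n\<close> by (intro det_zero_row[OF U']) (auto simp: U'_def)
  ultimately show ?thesis
    using det_mult[OF V' U'] by simp
qed

lemma not_alg_shift_equiv_larger_nonsingular:
  fixes A :: "'a :: idom mat"
  assumes A: "A \<in> carrier_mat m m" and "det A = 0"
    and B: "nonsingular_mat B" and "m \<le> dim_row B"
  shows "\<not> alg_shift_equiv A B"
proof
  define n where "n = dim_row B"
  assume "alg_shift_equiv A B"
  then obtain l where "alg_shift_equiv_lag (Suc l) A B"
    unfolding alg_shift_equiv_def using alg_shift_equiv_lag_Suc by blast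
  then obtain U V where "U \<in> carrier_mat (dim_row A) n" and "V \<in> carrier_mat n (dim_row A)"
    and Al: "A ^\<^sub>m Suc l = U * V" and Bl: "B ^\<^sub>m Suc l = V * U"
    unfolding alg_shift_equiv_lag_def n_def by blast
  then have U: "U \<in> carrier_mat m n" and V: "V \<in> carrier_mat n m"
    using A by simp_all
  have "B \<in> carrier_mat n n" and "det B \<noteq> 0"
    using B unfolding nonsingular_mat_def n_def by (auto intro: carrier_matI)
  then have "det (V * U) \<noteq> 0"
    using Bl det_pow_mat[of B n "Suc l"] by simp
  moreover have "det (V * U) = 0"
  proof (cases "m = n")
    case True
    have "det (V * U) = det V * det U"
      using U V True by (intro det_mult) auto
    also have "\<dots> = det (U * V)"
      using U V True det_mult[of U m V] by (simp add: mult.commute)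
    also have "\<dots> = det A ^ Suc l"
      using Al det_pow_mat[OF A, of "Suc l"] by simp
    finally show ?thesis
      using \<open>det A = 0\<close> by simp
  next
    case False
    with \<open>m \<le> dim_row B\<close> have "m < n"
      unfolding n_def by simp
    then show ?thesis
      by (rule det_mult_through_smaller_dim[OF U V])
  qed
  ultimately show False by contradiction
qed

lemma det_skew_symmetric_odd:
  fixes A :: "'a :: {idom, ring_char_0} mat"
  assumes A: "A \<in> carrier_mat n n" and skew: "transpose_mat A = - A" and "odd n"
  shows "det A = 0"
proof -
  have "- A = (-1) \<cdot>\<^sub>m A"
    by (rule eq_matI) auto
  then have "det A = - det A"
    using det_transpose[OF A] A \<open>odd n\<close> by (simp add: skew)
  then show ?thesis
    by simp
qed

lemma matA_carrier: "matA \<in> carrier_mat 3 3"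
  unfolding matA_def mat_of_rows_list_def by auto

lemma det_matA: "det matA = 0"
proof (rule det_skew_symmetric_odd[OF matA_carrier])
  show "transpose_mat matA = - matA"
    by (rule eq_matI) (auto simp: matA_def mat_of_rows_list_def less_Suc_eq numeral_3_eq_3)
qed simp

definition eval_rpoly3 :: "(nat \<Rightarrow> real) \<Rightarrow> rpoly3 \<Rightarrow> real" where
  "eval_rpoly3 x q = poly (poly (poly q [:[:x 2:]:]) [:x 1:]) (x 0)"

lemma comm_ring_hom_eval_rpoly3: "comm_ring_hom (eval_rpoly3 x)"
  by unfold_locales (simp_all add: eval_rpoly3_def)

lemma continuous_map_poly:
  assumes "continuous_map X euclideanreal f"
  shows "continuous_map X euclideanreal (\<lambda>t. poly (p :: real poly) (f t))"
  by (induction p) (simp_all add: continuous_map_add continuous_map_real_mult assms)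

lemma continuous_map_poly_poly:
  assumes "continuous_map X euclideanreal f" and "continuous_map X euclideanreal g"
  shows "continuous_map X euclideanreal (\<lambda>t. poly (poly (p :: real poly poly) [:g t:]) (f t))"
  by (induction p) (simp_all add: continuous_map_add continuous_map_real_mult assms continuous_map_poly)

lemma continuous_map_eval_rpoly3:
  assumes "\<And>i. continuous_map X euclideanreal (\<lambda>t. x t i)"
  shows "continuous_map X euclideanreal (\<lambda>t. eval_rpoly3 (x t) q)"
  unfolding eval_rpoly3_def
  by (induction q) (simp_all add: continuous_map_add continuous_map_real_mult assms continuous_map_poly_poly)

definition matA_at :: "(nat \<Rightarrow> real) \<Rightarrow> real mat" where
  "matA_at x = map_mat (eval_rpoly3 x) matA"

lemma matA_at_eq:
  "matA_at x = mat_of_rows_list 3 [[0, x 2, - x 1], [- x 2, 0, x 0], [x 1, - x 0, 0]]"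
  by (rule eq_matI)
    (auto simp: matA_at_def matA_def mat_of_rows_list_def less_Suc_eq numeral_3_eq_3
       eval_rpoly3_def varX_def varY_def varZ_def)

lemma matA_at_pow: "matA_at x ^\<^sub>m k = map_mat (eval_rpoly3 x) (matA ^\<^sub>m k)"
proof -
  interpret comm_ring_hom "eval_rpoly3 x"
    by (rule comm_ring_hom_eval_rpoly3)
  show ?thesis
    unfolding matA_at_def
    by (rule mat_hom_pow[OF matA_carrier, symmetric])
qed

definition proj_orth :: "nat \<Rightarrow> (nat \<Rightarrow> real) \<Rightarrow> real mat" where
  "proj_orth n x = Matrix.mat n n (\<lambda>(i, j). of_bool (i = j) - x i * x j)"

lemma proj_orth_idem:
  assumes "(\<Sum>k<n. (x k)\<^sup>2) = 1"
  shows "proj_orth n x * proj_orth n x = proj_orth n x"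
proof (rule eq_matI)
  fix i j assume "i < dim_row (proj_orth n x)" "j < dim_col (proj_orth n x)"
  then have ij: "i < n" "j < n"
    by (simp_all add: proj_orth_def)
  have "(proj_orth n x * proj_orth n x) $$ (i, j)
      = (\<Sum>k<n. (of_bool (i = k) - x i * x k) * (of_bool (k = j) - x k * x j))"
    using ij by (simp add: proj_orth_def scalar_prod_def atLeast0LessThan)
  also have "\<dots> = (\<Sum>k<n. of_bool (i = k) * of_bool (k = j)) - (\<Sum>k<n. of_bool (i = k) * (x k * x j))
      - (\<Sum>k<n. of_bool (k = j) * (x i * x k)) + x i * x j * (\<Sum>k<n. (x k)\<^sup>2)"
    by (simp add: algebra_simps power2_eq_square sum.distrib sum_subtractf sum_distrib_left)
  also have "\<dots> = of_bool (i = j) - 2 * (x i * x j) + x i * x j * (\<Sum>k<n. (x k)\<^sup>2)"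
  proof -
    have "{..<n} \<inter> {k. i = k} = {i}" "{..<n} \<inter> {k. k = j} = {j}"
      using ij by auto
    then show ?thesis
      by simp
  qed
  finally show "(proj_orth n x * proj_orth n x) $$ (i, j) = proj_orth n x $$ (i, j)"
    using ij assms by (simp add: proj_orth_def)
qed (simp_all add: proj_orth_def)

lemma index_mult_mat_3:
  assumes "A \<in> carrier_mat 3 3" "B \<in> carrier_mat 3 3" "i < 3" "j < 3"
  shows "(A * B) $$ (i, j) = A $$ (i, 0) * B $$ (0, j) + A $$ (i, 1) * B $$ (1, j) + A $$ (i, 2) * B $$ (2, j)"
proof -
  have "{0..<3} = {0, 1, 2::nat}"
    by auto
  then show ?thesis
    using assms by (simp add: scalar_prod_def add.assoc)
qed

lemma matA_at_carrier: "matA_at x \<in> carrier_mat 3 3"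
  unfolding matA_at_def using matA_carrier by simp

lemma proj_orth_carrier: "proj_orth n x \<in> carrier_mat n n"
  by (simp add: proj_orth_def)

lemma matA_at_square:
  assumes unit: "(\<Sum>k<3. (x k)\<^sup>2) = 1"
  shows "matA_at x * matA_at x = - proj_orth 3 x"
proof (rule eq_matI)
  have unit': "x 0 * x 0 + x 1 * x 1 + x 2 * x 2 = 1"
    using unit by (simp add: eval_nat_numeral power2_eq_square add.assoc)
  fix i j assume "i < dim_row (- proj_orth 3 x)" "j < dim_col (- proj_orth 3 x)"
  then have ij: "i < 3" "j < 3"
    by (simp_all add: proj_orth_def)
  then have "i \<in> {0, 1, 2}" "j \<in> {0, 1, 2}"
    by auto
  then show "(matA_at x * matA_at x) $$ (i, j) = (- proj_orth 3 x) $$ (i, j)"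
    unfolding index_mult_mat_3[OF matA_at_carrier matA_at_carrier ij]
    using unit' by (auto simp: matA_at_eq mat_of_rows_list_def proj_orth_def algebra_simps)
qed (simp_all add: matA_at_eq mat_of_rows_list_def proj_orth_def)

lemma matA_at_pow_four:
  assumes unit: "(\<Sum>k<3. (x k)\<^sup>2) = 1"
  shows "matA_at x ^\<^sub>m 4 = proj_orth 3 x"
proof -
  have "matA_at x ^\<^sub>m 2 = - proj_orth 3 x"
    using matA_at_square[OF unit] matA_at_carrier[of x] by (simp add: numeral_2_eq_2)
  then have "matA_at x ^\<^sub>m 4 = (- proj_orth 3 x) * (- proj_orth 3 x)"
    using pow_mat_add[OF matA_at_carrier, of x 2 2] by simp
  then show ?thesis
    using proj_orth_idem[OF unit] by (simp add: proj_orth_def)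
qed

lemma matA_at_pow_four_mult:
  assumes unit: "(\<Sum>k<3. (x k)\<^sup>2) = 1"
  shows "matA_at x ^\<^sub>m (4 * Suc k) = proj_orth 3 x"
proof (induction k)
  case (Suc k)
  have "matA_at x ^\<^sub>m (4 * Suc (Suc k)) = matA_at x ^\<^sub>m (4 * Suc k) * matA_at x ^\<^sub>m 4"
    using pow_mat_add[OF matA_at_carrier, of x "4 * Suc k" 4] by simp
  then show ?case
    using Suc matA_at_pow_four[OF unit] proj_orth_idem[OF unit] by simp
qed (use matA_at_pow_four[OF unit] in simp)

lemma proj_orth_3_not_rank_one:
  assumes unit: "(\<Sum>k<3. (x k)\<^sup>2) = 1"
  shows "\<not> (\<forall>i<3. \<forall>j<3. proj_orth 3 x $$ (i, j) = g i * h j)"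
proof
  assume rank_one: "\<forall>i<3. \<forall>j<3. proj_orth 3 x $$ (i, j) = g i * h j"
  have minor: "(1 - x i * x i) * (1 - x j * x j) = (x i * x j) * (x j * x i)"
    if "i < 3" "j < 3" "i \<noteq> j" for i j
  proof -
    have "proj_orth 3 x $$ (i, i) * proj_orth 3 x $$ (j, j) = proj_orth 3 x $$ (i, j) * proj_orth 3 x $$ (j, i)"
      using rank_one that by (simp add: algebra_simps)
    then show ?thesis
      using that by (simp add: proj_orth_def)
  qed
  have "1 - x 0 * x 0 - x 1 * x 1 = 0"
    using minor[of 0 1] by (simp add: algebra_simps)
  moreover have "1 - x 0 * x 0 - x 2 * x 2 = 0"
    using minor[of 0 2] by (simp add: algebra_simps)
  moreover have "1 - x 1 * x 1 - x 2 * x 2 = 0"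
    using minor[of 1 2] by (simp add: algebra_simps)
  moreover have "x 0 * x 0 + x 1 * x 1 + x 2 * x 2 = 1"
    using unit by (simp add: eval_nat_numeral power2_eq_square add.assoc)
  ultimately show False
    by linarith
qed

lemma proj_orth_3_factor_through_le_2:
  assumes unit: "(\<Sum>k<3. (x k)\<^sup>2) = 1"
    and factor: "proj_orth 3 x = X * K"
    and X: "X \<in> carrier_mat 3 n" and K: "K \<in> carrier_mat n 3" and "n \<le> 2"
  shows "0 < n \<and> (\<exists>i<3. X $$ (i, 0) \<noteq> 0)"
proof (rule ccontr)
  assume col0: "\<not> ?thesis"
  \<comment> \<open>only column 1 of X can contribute, so the product would have rank at most one\<close>
  define g where "g i = (if n = 2 then X $$ (i, 1) else 0)" for i
  define h where "h j = (if n = 2 then K $$ (1, j) else 0)" for j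
  have "proj_orth 3 x $$ (i, j) = g i * h j" if "i < 3" "j < 3" for i j
  proof -
    have "proj_orth 3 x $$ (i, j) = (\<Sum>k<n. X $$ (i, k) * K $$ (k, j))"
      using that X K by (simp add: factor scalar_prod_def atLeast0LessThan)
    moreover have "n = 0 \<or> n = 1 \<or> n = 2"
      using \<open>n \<le> 2\<close> by auto
    moreover have "X $$ (i, 0) = 0" if "n \<noteq> 0"
      using col0 that \<open>i < 3\<close> by auto
    ultimately show ?thesis
      by (auto simp: g_def h_def eval_nat_numeral)
  qed
  then show False
    using proj_orth_3_not_rank_one[OF unit] by blast
qed

lemma matA_at_pow_factor_through_le_2:
  assumes unit: "(\<Sum>k<3. (x k)\<^sup>2) = 1"
    and factor: "matA_at x ^\<^sub>m Suc l = G * H"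
    and G: "G \<in> carrier_mat 3 n" and H: "H \<in> carrier_mat n 3" and "n \<le> 2"
  shows "0 < n \<and> (\<exists>i<3. (proj_orth 3 x * G) $$ (i, 0) \<noteq> 0)"
proof (rule proj_orth_3_factor_through_le_2[OF unit _ _ _ \<open>n \<le> 2\<close>])
  let ?M = "matA_at x" and ?P = "proj_orth 3 x"
  define K where "K = H * ?M ^\<^sub>m (3 * Suc l)"
  show K_carrier: "K \<in> carrier_mat n 3"
    unfolding K_def using H matA_at_carrier[of x] by simp
  show PG_carrier: "?P * G \<in> carrier_mat 3 n"
    using G proj_orth_carrier[of 3 x] by simp
  have "?P = ?M ^\<^sub>m (Suc l + 3 * Suc l)"
    using matA_at_pow_four_mult[OF unit, of l] by simp
  also have "\<dots> = ?M ^\<^sub>m Suc l * ?M ^\<^sub>m (3 * Suc l)"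
    by (rule pow_mat_add[OF matA_at_carrier])
  also have "\<dots> = G * K"
    unfolding factor K_def using G H matA_at_carrier[of x] by (simp add: assoc_mult_mat[of G 3 n H 3 _ 3])
  finally have "?P = G * K" .
  then have "?P = ?P * (G * K)"
    using proj_orth_idem[OF unit] by simp
  also have "\<dots> = (?P * G) * K"
    using G K_carrier proj_orth_carrier[of 3 x] by (simp add: assoc_mult_mat[of _ 3 3 _ n _ 3])
  finally show "?P = (?P * G) * K" .
qed

lemma topspace_nsphere_2_sum_squares:
  assumes "x \<in> topspace (nsphere 2)"
  shows "(\<Sum>k<3. (x k)\<^sup>2) = 1"
proof -
  have "{..<3} = {..2::nat}"
    by auto
  then show ?thesis
    using assms by (simp add: nsphere)
qed

lemma matA_pow_not_factor_through_le_2: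
  fixes U V :: "rpoly3 mat"
  assumes U: "U \<in> carrier_mat 3 n" and V: "V \<in> carrier_mat n 3" and "n \<le> 2"
  shows "matA ^\<^sub>m Suc l \<noteq> U * V"
proof
  assume factor: "matA ^\<^sub>m Suc l = U * V"
  define u where "u x k = eval_rpoly3 x (U $$ (k, 0))" for x k
  define f where "f x i = (\<Sum>k<3. (of_bool (i = k) - x i * x k) * u x k)" for x i
  have "\<exists>x \<in> topspace (nsphere 2). \<forall>i\<le>2. f x i = 0"
  proof (rule hairy_ball)
    show "continuous_map (nsphere 2) euclideanreal (\<lambda>x. f x i)" for i
      unfolding f_def u_def
      by (intro continuous_map_sum continuous_map_real_mult continuous_map_diff
          continuous_map_eval_rpoly3 continuous_map_nsphere_projection) auto
    show "(\<Sum>i\<le>2. x i * f x i) = 0" if "x \<in> topspace (nsphere 2)" for x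
    proof -
      have "(\<Sum>i\<le>2. x i * f x i) = (\<Sum>k<3. x k * u x k) * (1 - (\<Sum>k<3. (x k)\<^sup>2))"
        by (simp add: f_def eval_nat_numeral atMost_Suc lessThan_Suc algebra_simps power2_eq_square)
      then show ?thesis
        using topspace_nsphere_2_sum_squares[OF that] by simp
    qed
  qed simp
  then obtain x where x: "x \<in> topspace (nsphere 2)" and zero: "\<forall>i\<le>2. f x i = 0"
    by blast
  interpret eval: comm_ring_hom "eval_rpoly3 x"
    by (rule comm_ring_hom_eval_rpoly3)
  let ?G = "map_mat (eval_rpoly3 x) U" and ?H = "map_mat (eval_rpoly3 x) V"
  have "matA_at x ^\<^sub>m Suc l = ?G * ?H"
    unfolding matA_at_pow factor using eval.mat_hom_mult[OF U V] .
  moreover have "?G \<in> carrier_mat 3 n" and "?H \<in> carrier_mat n 3"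
    using U V by simp_all
  ultimately obtain i where "0 < n" "i < 3" and nonzero: "(proj_orth 3 x * ?G) $$ (i, 0) \<noteq> 0"
    using matA_at_pow_factor_through_le_2[OF topspace_nsphere_2_sum_squares[OF x]] \<open>n \<le> 2\<close> by blast
  have eq: "(proj_orth 3 x * ?G) $$ (i, 0) = f x i"
  proof -
    have "(proj_orth 3 x * ?G) $$ (i, 0) = (\<Sum>k<3. proj_orth 3 x $$ (i, k) * ?G $$ (k, 0))"
      using \<open>0 < n\<close> \<open>i < 3\<close> U proj_orth_carrier[of 3 x]
      by (simp add: scalar_prod_def atLeast0LessThan)
    also have "\<dots> = f x i"
      unfolding f_def u_def using \<open>0 < n\<close> \<open>i < 3\<close> U
      by (intro sum.cong) (auto simp: proj_orth_def)
    finally show ?thesis .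
  qed
  have "f x i \<noteq> 0"
    using nonzero unfolding eq .
  with zero \<open>i < 3\<close> show False
    by simp
qed

lemma not_nilpotent_matA: "\<not> nilpotent_mat matA"
proof
  assume "nilpotent_mat matA"
  then obtain k where k: "matA ^\<^sub>m k = 0\<^sub>m 3 3"
    unfolding nilpotent_mat_def using matA_carrier by auto
  define e :: "nat \<Rightarrow> real" where "e i = of_bool (i = 0)" for i
  have unit: "(\<Sum>i<3. (e i)\<^sup>2) = 1"
    by (simp add: e_def eval_nat_numeral lessThan_Suc)
  have "matA_at e ^\<^sub>m k = 0\<^sub>m 3 3"
    unfolding matA_at_pow k by (rule eq_matI) (simp_all add: eval_rpoly3_def)
  have exponent: "k + (3 * k + 4) = 4 * Suc k"
    by simp
  have "proj_orth 3 e = matA_at e ^\<^sub>m (k + (3 * k + 4))"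
    unfolding exponent by (rule matA_at_pow_four_mult[OF unit, symmetric])
  also have "\<dots> = matA_at e ^\<^sub>m k * matA_at e ^\<^sub>m (3 * k + 4)"
    by (rule pow_mat_add[OF matA_at_carrier])
  also have "\<dots> = 0\<^sub>m 3 3"
    using \<open>matA_at e ^\<^sub>m k = 0\<^sub>m 3 3\<close> matA_at_carrier[of e] by simp
  finally have "proj_orth 3 e $$ (1, 1) = 0"
    by simp
  then show False
    by (simp add: proj_orth_def e_def)
qed

theorem theorem1p2:
  shows "(\<forall>B :: rpoly3 mat. nonsingular_mat B \<longrightarrow> \<not> alg_shift_equiv matA B)
         \<and> \<not> nilpotent_mat matA"
proof (intro conjI allI impI)
  fix B :: "rpoly3 mat"
  assume B: "nonsingular_mat B"
  show "\<not> alg_shift_equiv matA B"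
  proof (cases "dim_row B \<le> 2")
    case True
    show ?thesis
    proof
      assume "alg_shift_equiv matA B"
      then obtain l where "alg_shift_equiv_lag (Suc l) matA B"
        unfolding alg_shift_equiv_def using alg_shift_equiv_lag_Suc by blast
      then obtain U V where "U \<in> carrier_mat 3 (dim_row B)" "V \<in> carrier_mat (dim_row B) 3"
        and "matA ^\<^sub>m Suc l = U * V"
        unfolding alg_shift_equiv_lag_def using matA_carrier by auto
      then show False
        using matA_pow_not_factor_through_le_2 True by blast
    qed
  next
    case False
    then show ?thesis
      using not_alg_shift_equiv_larger_nonsingular[OF matA_carrier det_matA B] by simp
  qed
qed (rule not_nilpotent_matA)

end
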